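(* In the 2SDI setting where Alice measures the qubit observables $A_0=\sigma_x$, $A_1=\sigma_y$ and Bob and Charlie are black boxes, the Mermin family $P^V_{MF}$ demonstrates tripartite steering (i.e. admits no 2SDI fully LHS-LHV model) whenever $V>\frac12$.
   Context: Outcomes and settings: $a,b,c,x,y,z\in\{0,1\}$. For a qubit observable $O$ with eigenvalues $\pm1$, the measurement has projectors $M_0=(\mathbb 1+O)/2$, $M_1=(\mathbb 1-O)/2$; $M^A_{a|x}$ denotes the projectors of $A_x$. Mermin family ($0<V\le1$): $P^V_{MF}(abc|xyz)=\frac{1+(-1)^{a\oplus b\oplus c\oplus xy\oplus yz\oplus xz}\,\delta_{x\oplus y\oplus1,z}\,V}{8}$. 2SDI fully LHS-LHV model: there exist probabilities $q_\lambda$, qubit states $\rho^\lambda_A$ and arbitrary conditional distributions $P_\lambda(b|y)$, $P_\lambda(c|z)$ with $P(abc|xyz)=\sum_\lambda q_\lambda \mathrm{Tr}(M^A_{a|x}\rho^\lambda_A)P_\lambda(b|y)P_\lambda(c|z)$ for all $a,b,c,x,y,z$. A correlation demonstrates tripartite steering in the 2SDI scenario iff it admits no such model. *)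

theory Defs
  imports "HOL-Analysis.Analysis"
begin

type_synonym cmat2 = "complex^2^2"

definition mtrace :: "cmat2 \<Rightarrow> complex" where
  "mtrace M = (\<Sum>i\<in>UNIV. M $ i $ i)"

definition hermitian2 :: "cmat2 \<Rightarrow> bool" where
  "hermitian2 M \<longleftrightarrow> (\<forall>i j. M $ i $ j = cnj (M $ j $ i))"

definition psd2 :: "cmat2 \<Rightarrow> bool" where
  "psd2 M \<longleftrightarrow> (\<forall>v::complex^2. 0 \<le> Re (\<Sum>i\<in>UNIV. cnj (v $ i) * (M *v v) $ i))"

definition qubit_state :: "cmat2 \<Rightarrow> bool" where
  "qubit_state \<rho> \<longleftrightarrow> hermitian2 \<rho> \<and> psd2 \<rho> \<and> mtrace \<rho> = 1"

definition sigma_x :: cmat2 where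
  "sigma_x = (\<chi> i j. if i = j then 0 else 1)"

definition sigma_y :: cmat2 where
  "sigma_y = (\<chi> i j. if i = j then 0 else if i = 0 then - \<i> else \<i>)"

definition proj :: "cmat2 \<Rightarrow> nat \<Rightarrow> cmat2" where
  "proj Ob a = (if a = 0 then scaleR (1/2) (mat 1 + Ob) else scaleR (1/2) (mat 1 - Ob))"

definition alice_obs :: "nat \<Rightarrow> cmat2" where
  "alice_obs x = (if x = 0 then sigma_x else sigma_y)"

definition born :: "nat \<Rightarrow> nat \<Rightarrow> cmat2 \<Rightarrow> real" where
  "born a x \<rho> = Re (mtrace (proj (alice_obs x) a ** \<rho>))"

text \<open>Mermin family correlations, outcomes/settings in {0,1}.\<close>
definition P_MF :: "real \<Rightarrow> nat \<Rightarrow> nat \<Rightarrow> nat \<Rightarrow> nat \<Rightarrow> nat \<Rightarrow> nat \<Rightarrow> real" where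
  "P_MF V a b c x y z =
     (1 + (-1) ^ (a + b + c + x*y + y*z + x*z)
          * (if (x + y + 1) mod 2 = z then 1 else 0) * V) / 8"

definition cond_dist :: "(nat \<Rightarrow> nat \<Rightarrow> real) \<Rightarrow> bool" where
  "cond_dist P \<longleftrightarrow> (\<forall>b y. 0 \<le> P b y) \<and> (\<forall>y\<le>1. P 0 y + P 1 y = 1)"

text \<open>2SDI fully LHS-LHV model, with finitely many hidden variables \<lambda> < n.\<close>
definition has_2SDI_LHS_LHV :: "(nat \<Rightarrow> nat \<Rightarrow> nat \<Rightarrow> nat \<Rightarrow> nat \<Rightarrow> nat \<Rightarrow> real) \<Rightarrow> bool" where
  "has_2SDI_LHS_LHV P \<longleftrightarrow>
    (\<exists>(n::nat) (q::nat \<Rightarrow> real) (\<rho>::nat \<Rightarrow> cmat2)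
        (PB::nat \<Rightarrow> nat \<Rightarrow> nat \<Rightarrow> real) (PC::nat \<Rightarrow> nat \<Rightarrow> nat \<Rightarrow> real).
       (\<forall>l<n. 0 \<le> q l) \<and> (\<Sum>l<n. q l) = 1 \<and>
       (\<forall>l<n. qubit_state (\<rho> l) \<and> cond_dist (PB l) \<and> cond_dist (PC l)) \<and>
       (\<forall>a b c x y z. a \<le> 1 \<longrightarrow> b \<le> 1 \<longrightarrow> c \<le> 1 \<longrightarrow> x \<le> 1 \<longrightarrow> y \<le> 1 \<longrightarrow> z \<le> 1 \<longrightarrow>
          P a b c x y z = (\<Sum>l<n. q l * born a x (\<rho> l) * PB l b y * PC l c z)))"

end

theory Submission
  imports Defs
begin

text \<open>The Mermin combination of the four correlators with x + y + z odd equals 4V for the Mermin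
  family. In a 2SDI model it is an average of terms a B0 C1 + a B1 C0 + b B0 C0 - b B1 C1, where
  (a, b) are the expectations of \<sigma>x and \<sigma>y in a qubit state, so a^2 + b^2 \<le> 1 (Bloch ball),
  and the B's and C's lie in [-1, 1]. By Cauchy-Schwarz each term is bounded by the norm of
  (B0 C1 + B1 C0, B0 C0 - B1 C1), whose square is (B0^2 + B1^2)(C0^2 + C1^2) \<le> 4.
  Hence 4V \<le> 2.\<close>

definition correlator :: "(nat \<Rightarrow> nat \<Rightarrow> nat \<Rightarrow> nat \<Rightarrow> nat \<Rightarrow> nat \<Rightarrow> real) \<Rightarrow> nat \<Rightarrow> nat \<Rightarrow> nat \<Rightarrow> real" where
  "correlator P x y z = (\<Sum>a\<in>{0,1}. \<Sum>b\<in>{0,1}. \<Sum>c\<in>{0,1}. (-1) ^ (a + b + c) * P a b c x y z)"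

definition mermin :: "(nat \<Rightarrow> nat \<Rightarrow> nat \<Rightarrow> nat \<Rightarrow> nat \<Rightarrow> nat \<Rightarrow> real) \<Rightarrow> real" where
  "mermin P = correlator P 0 0 1 + correlator P 0 1 0 + correlator P 1 0 0 - correlator P 1 1 1"

lemma mermin_P_MF: "mermin (P_MF V) = 4 * V"
  by (simp add: mermin_def correlator_def P_MF_def) (simp add: field_simps)

lemma born_sigma_x_difference:
  assumes "hermitian2 r"
  shows "born 0 0 r - born 1 0 r = 2 * Re (r$1$2)"
proof -
  have "r$2$1 = cnj (r$1$2)" using assms unfolding hermitian2_def by blast
  then show ?thesis
    by (simp add: born_def proj_def alice_obs_def sigma_x_def mtrace_def sum_2
        matrix_matrix_mult_def mat_def algebra_simps)
qed

lemma born_sigma_y_difference: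
  assumes "hermitian2 r"
  shows "born 0 1 r - born 1 1 r = 2 * Im (r$1$2)"
proof -
  have "r$2$1 = cnj (r$1$2)" using assms unfolding hermitian2_def by blast
  then show ?thesis
    by (simp add: born_def proj_def alice_obs_def sigma_y_def mtrace_def sum_2
        matrix_matrix_mult_def mat_def algebra_simps)
qed

lemma qubit_state_offdiag_bound:
  assumes "qubit_state r"
  shows "4 * (cmod (r$1$2))\<^sup>2 \<le> 1"
proof -
  define p s c where "p = r$1$1" and "s = r$2$2" and "c = r$1$2"
  have herm: "hermitian2 r" and psd: "psd2 r" and tr: "mtrace r = 1"
    using assms by (auto simp: qubit_state_def)
  have r21: "r$2$1 = cnj c" using herm unfolding hermitian2_def c_def by blast
  have "Im p = 0" "Im s = 0"
    using herm unfolding hermitian2_def p_def s_def by (metis cnj.simps(2) neg_equal_zero)+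
  moreover have trace: "Re p + Re s = 1"
    using arg_cong[where f = Re, OF tr] by (simp add: mtrace_def sum_2 p_def s_def)
  txt \<open>Testing positivity on (-c, p) and (s, -cnj c) yields p det r \<ge> 0 and s det r \<ge> 0;
    as p + s = 1 this gives det r \<ge> 0, i.e. |c|^2 \<le> p s \<le> 1/4.\<close>
  define form where "form v = Re (\<Sum>i\<in>UNIV. cnj (v $ i) * (r *v v) $ i)" for v :: "complex^2"
  have "0 \<le> form (vector [-c, p])" "0 \<le> form (vector [s, -cnj c])"
    using psd unfolding psd2_def form_def by blast+
  moreover have "form (vector [-c, p]) = Re (cnj (-c) * (p * (-c) + c * p) + cnj p * (cnj c * (-c) + s * p))"
    and "form (vector [s, -cnj c]) = Re (cnj s * (p * s - c * cnj c) + c * (cnj c * s - s * cnj c))"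
    by (simp_all add: form_def sum_2 matrix_vector_mult_def p_def[symmetric] s_def[symmetric]
        c_def[symmetric] r21)
  ultimately have "0 \<le> Re p * (Re p * Re s - (cmod c)\<^sup>2)" "0 \<le> Re s * (Re p * Re s - (cmod c)\<^sup>2)"
    unfolding cmod_power2 by (simp_all add: power2_eq_square algebra_simps)
  then have "0 \<le> (Re p + Re s) * (Re p * Re s - (cmod c)\<^sup>2)"
    by (simp add: distrib_right)
  then have "(cmod c)\<^sup>2 \<le> Re p * Re s"
    using trace by simp
  moreover have "4 * (Re p * Re s) \<le> (Re p + Re s)\<^sup>2"
    using zero_le_power2[of "Re p - Re s"] by (simp add: power2_eq_square algebra_simps)
  ultimately show ?thesis
    using trace by (simp add: c_def)
qed

lemma qubit_state_bloch_bound: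
  assumes "qubit_state r"
  shows "(born 0 0 r - born 1 0 r)\<^sup>2 + (born 0 1 r - born 1 1 r)\<^sup>2 \<le> 1"
proof -
  have "hermitian2 r" using assms by (simp add: qubit_state_def)
  then have "(born 0 0 r - born 1 0 r)\<^sup>2 + (born 0 1 r - born 1 1 r)\<^sup>2 = 4 * (cmod (r$1$2))\<^sup>2"
    by (simp only: born_sigma_x_difference born_sigma_y_difference cmod_power2 power_mult_distrib)
      simp
  with qubit_state_offdiag_bound[OF assms] show ?thesis by simp
qed

lemma cond_dist_difference_bound:
  assumes "cond_dist P" and "y \<le> 1"
  shows "\<bar>P 0 y - P 1 y\<bar> \<le> 1"
  using assms unfolding cond_dist_def by (smt (verit))

lemma mermin_term_le_2:
  fixes a b B0 B1 C0 C1 :: real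
  assumes "a\<^sup>2 + b\<^sup>2 \<le> 1" and "\<bar>B0\<bar> \<le> 1" "\<bar>B1\<bar> \<le> 1" "\<bar>C0\<bar> \<le> 1" "\<bar>C1\<bar> \<le> 1"
  shows "a * B0 * C1 + a * B1 * C0 + b * B0 * C0 - b * B1 * C1 \<le> 2"
proof -
  define u w where "u = B0 * C1 + B1 * C0" and "w = B0 * C0 - B1 * C1"
  have "u\<^sup>2 + w\<^sup>2 = (B0\<^sup>2 + B1\<^sup>2) * (C0\<^sup>2 + C1\<^sup>2)"
    by (simp add: u_def w_def power2_eq_square algebra_simps)
  also have "\<dots> \<le> 2 * 2"
  proof -
    have "B0\<^sup>2 \<le> 1" "B1\<^sup>2 \<le> 1" "C0\<^sup>2 \<le> 1" "C1\<^sup>2 \<le> 1"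
      using assms(2-5) by (simp_all add: abs_square_le_1)
    then show ?thesis by (intro mult_mono) auto
  qed
  finally have uw: "u\<^sup>2 + w\<^sup>2 \<le> 4" by simp
  have "4 * (a * u + b * w) \<le> 4 * (a\<^sup>2 + b\<^sup>2) + (u\<^sup>2 + w\<^sup>2)"
    using zero_le_power2[of "2 * a - u"] zero_le_power2[of "2 * b - w"]
    by (simp add: power2_eq_square algebra_simps)
  with uw assms(1) have "a * u + b * w \<le> 2" by (smt (verit))
  then show ?thesis by (simp add: u_def w_def algebra_simps)
qed

lemma correlator_product_model:
  assumes "\<And>a b c. a \<le> 1 \<Longrightarrow> b \<le> 1 \<Longrightarrow> c \<le> 1 \<Longrightarrow>
      P a b c x y z = (\<Sum>l<n. q l * A l a * B l b * C l c)"
  shows "correlator P x y z = (\<Sum>l<n. q l * (A l 0 - A l 1) * (B l 0 - B l 1) * (C l 0 - C l 1))"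
proof -
  have "correlator P x y z =
      (\<Sum>a\<in>{0,1}. \<Sum>b\<in>{0,1}. \<Sum>c\<in>{0,1}. \<Sum>l<n. (-1) ^ (a + b + c) * (q l * A l a * B l b * C l c))"
    unfolding correlator_def by (intro sum.cong refl) (auto simp: assms sum_distrib_left)
  also have "\<dots> = (\<Sum>l<n. \<Sum>a\<in>{0,1}. \<Sum>b\<in>{0,1}. \<Sum>c\<in>{0,1}. (-1) ^ (a + b + c) * (q l * A l a * B l b * C l c))"
    by (simp only: sum.swap[where B = "{..<n}"])
  also have "\<dots> = (\<Sum>l<n. q l * (A l 0 - A l 1) * (B l 0 - B l 1) * (C l 0 - C l 1))"
    by (rule sum.cong) (simp_all add: algebra_simps)
  finally show ?thesis .
qed

lemma mermin_le_2_if_has_2SDI_LHS_LHV: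
  assumes "has_2SDI_LHS_LHV P"
  shows "mermin P \<le> 2"
proof -
  obtain n :: nat and q \<rho> PB PC where q_nonneg: "\<forall>l<n. 0 \<le> q l" and q_sum: "(\<Sum>l<n. q l) = 1"
    and local: "\<forall>l<n. qubit_state (\<rho> l) \<and> cond_dist (PB l) \<and> cond_dist (PC l)"
    and model: "\<forall>a b c x y z. a \<le> 1 \<longrightarrow> b \<le> 1 \<longrightarrow> c \<le> 1 \<longrightarrow> x \<le> 1 \<longrightarrow> y \<le> 1 \<longrightarrow> z \<le> 1 \<longrightarrow>
        P a b c x y z = (\<Sum>l<n. q l * born a x (\<rho> l) * PB l b y * PC l c z)"
    using assms unfolding has_2SDI_LHS_LHV_def by blast
  define A where "A l x = born 0 x (\<rho> l) - born 1 x (\<rho> l)" for l x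
  define B where "B l y = PB l 0 y - PB l 1 y" for l y
  define C where "C l z = PC l 0 z - PC l 1 z" for l z
  have corr: "correlator P x y z = (\<Sum>l<n. q l * A l x * B l y * C l z)"
    if "x \<le> 1" "y \<le> 1" "z \<le> 1" for x y z
    unfolding A_def B_def C_def using model that by (intro correlator_product_model) simp
  have "mermin P = (\<Sum>l<n. q l * (A l 0 * B l 0 * C l 1 + A l 0 * B l 1 * C l 0
      + A l 1 * B l 0 * C l 0 - A l 1 * B l 1 * C l 1))"
    by (simp add: mermin_def corr sum.distrib[symmetric] sum_subtractf[symmetric] sum_negf algebra_simps)
  also have "\<dots> \<le> (\<Sum>l<n. q l * 2)"
  proof (rule sum_mono)
    fix l assume "l \<in> {..<n}"
    with q_nonneg local show "q l * (A l 0 * B l 0 * C l 1 + A l 0 * B l 1 * C l 0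
        + A l 1 * B l 0 * C l 0 - A l 1 * B l 1 * C l 1) \<le> q l * 2"
      unfolding A_def B_def C_def
      by (intro mult_left_mono mermin_term_le_2 qubit_state_bloch_bound cond_dist_difference_bound) auto
  qed
  also have "\<dots> = 2" using q_sum by (simp add: sum_distrib_right[symmetric])
  finally show ?thesis .
qed

theorem proposition8:
  fixes V :: real
  assumes "0 < V" and "V \<le> 1" and "V > 1/2"
  shows "\<not> has_2SDI_LHS_LHV (P_MF V)"
  using mermin_le_2_if_has_2SDI_LHS_LHV[of "P_MF V"] mermin_P_MF[of V] \<open>V > 1/2\<close> by linarith

end
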